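(* Let $k$ be a field, let $\mathrm{\underline{Rep}}(\mathbb{G})$ be the Delannoy category over $k$, and let $X$ be a $\mathbb{G}$-set. Identify $\Gamma(\mathcal{C}(X)\otimes\mathcal{C}(X))=\Gamma(\mathcal{C}(X\times X))$ with the algebra of $\mathbb{G}$-invariant $k$-valued functions on $X\times X$ under pointwise multiplication. Then an element $\gamma$ of this algebra is an E-idempotent of $\mathcal{C}(X)$ if and only if it is the indicator function of a $\mathbb{G}$-stable equivalence relation $R\subset X\times X$; thus E-idempotents of $\mathcal{C}(X)$ correspond bijectively to $\mathbb{G}$-stable equivalence relations on $X$.
   Context: $\mathbb{G}=\mathrm{Aut}(\mathbf{R},<)$, topologized so that pointwise stabilizers of finite subsets form a neighborhood basis of $1$; a $\mathbb{G}$-set is a set with an action having open stabilizers and finitely many orbits. The Delannoy category is the Karoubi envelope of Harman–Snowden's $\mathrm{\underline{Perm}}(\mathbb{G},\mu)$ for the measure $\mu$ with $\mu(\mathbf{R}^{(n)})=(-1)^n$; its objects $\mathcal{C}(X)$ (Schwartz spaces) are étale commutative algebras, $\mathcal{C}(X)\otimes\mathcal{C}(Y)=\mathcal{C}(X\times Y)$, and $\Gamma(\mathcal{C}(X))=\mathrm{Hom}(\mathbf{1},\mathcal{C}(X))$ is the algebra of $\mathbb{G}$-invariant functions on $X$ under pointwise multiplication. For an étale algebra $B$, an E-idempotent is an idempotent $\gamma\in\Gamma(B\otimes B)$ such that (a) $m(\gamma)=1$ where $m:B\otimes B\to B$ is multiplication; (b) $\tau(\gamma)=\gamma$ where $\tau$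 is the symmetry of $B\otimes B$; (c) writing $\gamma_{i,j}\in\Gamma(B^{\otimes3})$ for $\gamma$ placed in factors $i,j$ and $1$ in the remaining factor, $\gamma_{1,2}\gamma_{2,3}=\gamma_{1,2}\gamma_{1,3}=\gamma_{1,3}\gamma_{2,3}$. *)

theory Defs
  imports Complex_Main
begin

text \<open>The group G = Aut(R,<): order-preserving bijections of the reals.\<close>
definition AutR :: "(real \<Rightarrow> real) set" where
  "AutR = {g. bij g \<and> strict_mono g}"

text \<open>A G-set: an action of AutR on the type 'x with open stabilizers
  (every point is fixed by the pointwise stabilizer of some finite subset of R)
  and finitely many orbits.\<close>
definition is_G_set :: "((real \<Rightarrow> real) \<Rightarrow> 'x \<Rightarrow> 'x) \<Rightarrow> bool" where
  "is_G_set act \<longleftrightarrow>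
     (\<forall>x. act id x = x) \<and>
     (\<forall>g\<in>AutR. \<forall>h\<in>AutR. \<forall>x. act (g \<circ> h) x = act g (act h x)) \<and>
     (\<forall>x. \<exists>A. finite A \<and> (\<forall>g\<in>AutR. (\<forall>a\<in>A. g a = a) \<longrightarrow> act g x = x)) \<and>
     finite {{act g x | g. g \<in> AutR} | x. True}"

text \<open>G-invariant k-valued functions on X x X, i.e. Gamma(C(X) (x) C(X)) = Gamma(C(X x X)).\<close>
definition invariant2 :: "((real \<Rightarrow> real) \<Rightarrow> 'x \<Rightarrow> 'x) \<Rightarrow> ('x \<times> 'x \<Rightarrow> 'k) \<Rightarrow> bool" where
  "invariant2 act \<gamma> \<longleftrightarrow> (\<forall>g\<in>AutR. \<forall>x y. \<gamma> (act g x, act g y) = \<gamma> (x, y))"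

text \<open>Under the identification Gamma(C(Y)) = invariant functions on Y (pointwise product):
  multiplication m : C(X)(x)C(X) -> C(X) is restriction to the diagonal, the symmetry tau
  swaps the coordinates, and gamma_{i,j} is gamma pulled back along the projection
  X^3 -> X^2 onto factors i,j.\<close>
definition mult_map :: "('x \<times> 'x \<Rightarrow> 'k) \<Rightarrow> ('x \<Rightarrow> 'k)" where
  "mult_map \<gamma> = (\<lambda>x. \<gamma> (x, x))"

definition swap_map :: "('x \<times> 'x \<Rightarrow> 'k) \<Rightarrow> ('x \<times> 'x \<Rightarrow> 'k)" where
  "swap_map \<gamma> = (\<lambda>(x, y). \<gamma> (y, x))"

definition gamma12 :: "('x \<times> 'x \<Rightarrow> 'k) \<Rightarrow> ('x \<times> 'x \<times> 'x \<Rightarrow> 'k)" where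
  "gamma12 \<gamma> = (\<lambda>(x, y, z). \<gamma> (x, y))"
definition gamma13 :: "('x \<times> 'x \<Rightarrow> 'k) \<Rightarrow> ('x \<times> 'x \<times> 'x \<Rightarrow> 'k)" where
  "gamma13 \<gamma> = (\<lambda>(x, y, z). \<gamma> (x, z))"
definition gamma23 :: "('x \<times> 'x \<Rightarrow> 'k) \<Rightarrow> ('x \<times> 'x \<times> 'x \<Rightarrow> 'k)" where
  "gamma23 \<gamma> = (\<lambda>(x, y, z). \<gamma> (y, z))"

definition E_idempotent :: "((real \<Rightarrow> real) \<Rightarrow> 'x \<Rightarrow> 'x) \<Rightarrow> ('x \<times> 'x \<Rightarrow> 'k::field) \<Rightarrow> bool" where
  "E_idempotent act \<gamma> \<longleftrightarrow>
     invariant2 act \<gamma> \<and>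
     (\<lambda>p. \<gamma> p * \<gamma> p) = \<gamma> \<and>
     mult_map \<gamma> = (\<lambda>_. 1) \<and>
     swap_map \<gamma> = \<gamma> \<and>
     (\<lambda>t. gamma12 \<gamma> t * gamma23 \<gamma> t) = (\<lambda>t. gamma12 \<gamma> t * gamma13 \<gamma> t) \<and>
     (\<lambda>t. gamma12 \<gamma> t * gamma13 \<gamma> t) = (\<lambda>t. gamma13 \<gamma> t * gamma23 \<gamma> t)"

definition G_stable_rel :: "((real \<Rightarrow> real) \<Rightarrow> 'x \<Rightarrow> 'x) \<Rightarrow> ('x \<times> 'x) set \<Rightarrow> bool" where
  "G_stable_rel act R \<longleftrightarrow> (\<forall>g\<in>AutR. \<forall>x y. (x, y) \<in> R \<longrightarrow> (act g x, act g y) \<in> R)"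

definition rel_indicator :: "('x \<times> 'x) set \<Rightarrow> ('x \<times> 'x \<Rightarrow> 'k::field)" where
  "rel_indicator R = (\<lambda>p. if p \<in> R then 1 else 0)"

end

theory Submission
  imports Defs
begin

text \<open>Since the product is pointwise, every axiom of an E-idempotent is a pointwise condition:
  idempotency forces values in \<open>{0, 1}\<close>, and then \<open>m(\<gamma>) = 1\<close>, \<open>\<tau>(\<gamma>) = \<gamma>\<close> and
  \<open>\<gamma>\<^sub>1\<^sub>2 \<gamma>\<^sub>2\<^sub>3 = \<gamma>\<^sub>1\<^sub>2 \<gamma>\<^sub>1\<^sub>3\<close> say exactly that the support of \<open>\<gamma>\<close> is reflexive, symmetric and
  transitive. Invariance of \<open>\<gamma>\<close> is G-stability of its support; conversely, the indicator of a
  G-stable relation is invariant because G acts by bijections.\<close>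

lemma AutR_inv:
  assumes "g \<in> AutR"
  shows "inv g \<in> AutR"
proof -
  have "bij g" "strict_mono g" using assms by (auto simp: AutR_def)
  then show ?thesis
    by (simp add: AutR_def bij_imp_bij_inv bij_is_surj bij_is_inj strict_mono_inv)
qed

lemma G_set_act_inv_cancel:
  assumes "is_G_set act" and "g \<in> AutR"
  shows "act (inv g) (act g x) = x"
proof -
  have "inv g \<circ> g = id" using assms(2) by (simp add: AutR_def bij_is_inj)
  then show ?thesis
    using assms AutR_inv[OF assms(2)] unfolding is_G_set_def by metis
qed

lemma G_stable_rel_iff:
  assumes "is_G_set act" and "G_stable_rel act R" and "g \<in> AutR"
  shows "(act g x, act g y) \<in> R \<longleftrightarrow> (x, y) \<in> R"
proof
  assume "(act g x, act g y) \<in> R"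
  then have "(act (inv g) (act g x), act (inv g) (act g y)) \<in> R"
    using assms(2) AutR_inv[OF assms(3)] by (simp add: G_stable_rel_def)
  then show "(x, y) \<in> R" by (simp add: G_set_act_inv_cancel[OF assms(1,3)])
qed (use assms(2,3) in \<open>simp add: G_stable_rel_def\<close>)

lemma invariant2_rel_indicator:
  assumes "is_G_set act" and "G_stable_rel act R"
  shows "invariant2 act (rel_indicator R)"
  using G_stable_rel_iff[OF assms] by (simp add: invariant2_def rel_indicator_def)

lemma inj_rel_indicator: "inj (rel_indicator :: ('x \<times> 'x) set \<Rightarrow> ('x \<times> 'x \<Rightarrow> 'k::field))"
proof (rule injI)
  fix R S :: "('x \<times> 'x) set"
  assume "(rel_indicator R :: 'x \<times> 'x \<Rightarrow> 'k) = rel_indicator S"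
  then show "R = S" by (auto simp: rel_indicator_def fun_eq_iff split: if_splits)
qed

lemma E_idempotent_pointwise:
  "E_idempotent act \<gamma> \<longleftrightarrow>
     invariant2 act \<gamma> \<and> (\<forall>p. \<gamma> p * \<gamma> p = \<gamma> p) \<and> (\<forall>x. \<gamma> (x, x) = 1) \<and>
     (\<forall>x y. \<gamma> (y, x) = \<gamma> (x, y)) \<and>
     (\<forall>x y z. \<gamma> (x, y) * \<gamma> (y, z) = \<gamma> (x, y) * \<gamma> (x, z)) \<and>
     (\<forall>x y z. \<gamma> (x, y) * \<gamma> (x, z) = \<gamma> (x, z) * \<gamma> (y, z))"
  by (simp add: E_idempotent_def mult_map_def swap_map_def gamma12_def gamma13_def gamma23_def
      fun_eq_iff)

lemma idempotent_field_cases: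
  fixes a :: "'k::field"
  assumes "a * a = a"
  shows "a = 0 \<or> a = 1"
proof -
  have "a * (a - 1) = 0" using assms by (simp add: algebra_simps)
  then show ?thesis by simp
qed

lemma E_idempotent_rel_indicator:
  assumes "is_G_set act" and "equiv UNIV R" and "G_stable_rel act R"
  shows "E_idempotent act (rel_indicator R)"
proof -
  from assms(2) have "refl R" "sym R" "trans R" by (simp_all add: equiv_def)
  then show ?thesis
    using invariant2_rel_indicator[OF assms(1,3)] unfolding E_idempotent_pointwise
    by (auto simp: rel_indicator_def refl_on_def dest: symD intro: transD)
qed

lemma E_idempotent_is_rel_indicator:
  assumes "E_idempotent act \<gamma>"
  defines "R \<equiv> {p. \<gamma> p = 1}"
  shows "equiv UNIV R" and "G_stable_rel act R" and "\<gamma> = rel_indicator R"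
proof -
  note E = assms(1)[unfolded E_idempotent_pointwise]
  have "refl R" and "sym R" using E by (auto simp: R_def refl_on_def sym_def)
  moreover have "trans R"
  proof (rule transI)
    fix x y z assume "(x, y) \<in> R" "(y, z) \<in> R"
    then have "\<gamma> (x, y) * \<gamma> (y, z) = 1" by (simp add: R_def)
    then show "(x, z) \<in> R" using E \<open>(x, y) \<in> R\<close> by (simp add: R_def)
  qed
  ultimately show "equiv UNIV R" by (simp add: equiv_def)
  show "G_stable_rel act R" using E by (simp add: R_def G_stable_rel_def invariant2_def)
  show "\<gamma> = rel_indicator R"
    using E idempotent_field_cases by (fastforce simp: R_def rel_indicator_def)
qed

theorem proposition3p2:
  fixes act :: "(real \<Rightarrow> real) \<Rightarrow> 'x \<Rightarrow> 'x"
  assumes "is_G_set act"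
  shows "(\<forall>\<gamma> :: 'x \<times> 'x \<Rightarrow> 'k::field. invariant2 act \<gamma> \<longrightarrow>
            (E_idempotent act \<gamma> \<longleftrightarrow>
             (\<exists>R. equiv UNIV R \<and> G_stable_rel act R \<and> \<gamma> = rel_indicator R)))
       \<and> bij_betw (rel_indicator :: ('x \<times> 'x) set \<Rightarrow> ('x \<times> 'x \<Rightarrow> 'k))
           {R. equiv UNIV R \<and> G_stable_rel act R}
           {\<gamma>. E_idempotent act \<gamma>}"
proof -
  have E_idempotent_iff: "E_idempotent act \<gamma> \<longleftrightarrow>
      (\<exists>R. equiv UNIV R \<and> G_stable_rel act R \<and> \<gamma> = rel_indicator R)"
    for \<gamma> :: "'x \<times> 'x \<Rightarrow> 'k"
    using E_idempotent_is_rel_indicator[of act \<gamma>] E_idempotent_rel_indicator[OF assms] by blast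
  moreover have "inj_on (rel_indicator :: ('x \<times> 'x) set \<Rightarrow> ('x \<times> 'x \<Rightarrow> 'k))
      {R. equiv UNIV R \<and> G_stable_rel act R}"
    using inj_rel_indicator by (rule inj_on_subset) simp
  ultimately show ?thesis by (auto simp: bij_betw_def)
qed

end
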